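(* Let $1<p<\infty$. There is a constant $C$ depending only on $N$ and $p$ such that for every $f\in C^1(\mathbb R^N)$, $$\int_{\mathbb R^N}\big(\log(1+|\nabla f(x)|)\big)^p\,dx\le C\liminf_{\lambda\to\infty}\lambda^p\,\mathcal L^{2N}\Big(\Big\{(x,y)\in\mathbb R^N\times\mathbb R^N:\log\Big(1+\frac{|f(x)-f(y)|}{|x-y|}\Big)\frac{1}{|x-y|^{N/p}}>\lambda\Big\}\Big).$$ *)

theory Defs
  imports "HOL-Analysis.Analysis"
begin

end

theory Submission
  imports Defs
begin

text \<open>
  Fix \<open>x\<close> with \<open>v = \<nabla>f(x) \<noteq> 0\<close>. For points \<open>y\<close> of the ball of radius \<open>s/4\<close> around
  \<open>x + (s/2) v/|v|\<close>, the vector \<open>y - x\<close> lies in a cone around \<open>v\<close>, so for small \<open>s\<close> the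
  difference quotient \<open>|f x - f y| / |x - y|\<close> is at least \<open>|v|/6\<close>. Choosing \<open>s\<close> with
  \<open>t s\<^sup>N\<^sup>/\<^sup>p = ln (1 + |v|/6)\<close>, this ball lies in the \<open>t\<close>-superlevel set of the \<open>x\<close>-section,
  whence \<open>t\<^sup>p\<close> times the measure of the section is at least \<open>c\<^sub>N ln (1 + |v|/6)\<^sup>p\<close> for all
  large \<open>t\<close>. Tonelli and Fatou's lemma along \<open>t \<rightarrow> \<infinity>\<close> integrate this bound over \<open>x\<close>, and
  \<open>ln (1 + r) \<le> 6 ln (1 + r/6)\<close> removes the factor \<open>1/6\<close>.
\<close>

lemma ln_one_plus_le_mult_ln_one_plus_divide:
  fixes y :: real and n :: nat
  assumes "y \<ge> 0" and "n > 0"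
  shows "ln (1 + y) \<le> n * ln (1 + y / n)"
proof -
  have "1 + real n * (y / n) \<le> (1 + y / n) ^ n"
    by (rule Bernoulli_inequality) (use assms in \<open>simp add: order.trans[of _ 0]\<close>)
  hence "ln (1 + y) \<le> ln ((1 + y / n) ^ n)"
    using assms by (subst ln_le_cancel_iff) auto
  also have "\<dots> = n * ln (1 + y / n)"
    using assms by (simp add: ln_realpow)
  finally show ?thesis .
qed

lemma ball_off_centre_subset_cone:
  fixes u x y :: "'a::real_inner"
  assumes u: "norm u = 1" and s: "s > 0" and y: "y \<in> ball (x + (s / 2) *\<^sub>R u) (s / 4)"
  shows "s / 4 < norm (y - x)" and "norm (y - x) < 3 * s / 4" and "norm (y - x) / 3 \<le> u \<bullet> (y - x)"
proof -
  define w where "w = y - x - (s / 2) *\<^sub>R u"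
  have w: "norm w < s / 4"
    using y by (simp add: w_def dist_norm norm_minus_commute algebra_simps)
  have yx: "y - x = (s / 2) *\<^sub>R u + w"
    by (simp add: w_def)
  have "norm (y - x) \<le> s / 2 + norm w"
    unfolding yx using norm_triangle_ineq[of "(s / 2) *\<^sub>R u" w] u s by simp
  thus upper: "norm (y - x) < 3 * s / 4"
    using w by simp
  have "s / 2 \<le> norm (y - x) + norm w"
    using norm_triangle_ineq4[of "y - x" w] u s by (simp add: yx)
  thus "s / 4 < norm (y - x)"
    using w by simp
  have "u \<bullet> (y - x) = s / 2 + u \<bullet> w"
    unfolding yx using u by (simp add: inner_add_right dot_square_norm power2_eq_square)
  moreover have "\<bar>u \<bullet> w\<bar> \<le> norm w"
    using Cauchy_Schwarz_ineq2[of u w] u by simp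
  ultimately show "norm (y - x) / 3 \<le> u \<bullet> (y - x)"
    using w upper by linarith
qed

lemma has_derivative_difference_quotient_in_cone:
  fixes f :: "'a::real_inner \<Rightarrow> real"
  assumes "(f has_derivative (\<lambda>h. v \<bullet> h)) (at x)"
  obtains d where "d > 0"
    and "\<And>y. norm (y - x) < d \<Longrightarrow> y \<noteq> x \<Longrightarrow> norm v * norm (y - x) / 3 \<le> v \<bullet> (y - x) \<Longrightarrow>
           norm v / 6 \<le> \<bar>f x - f y\<bar> / norm (x - y)"
proof (cases "v = 0")
  case True
  show ?thesis
    by (rule that[of 1]) (simp_all add: True)
next
  case False
  then obtain d where "d > 0" and
    d: "\<And>y. norm (y - x) < d \<Longrightarrow> norm (f y - f x - v \<bullet> (y - x)) \<le> norm v / 6 * norm (y - x)"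
    using assms unfolding has_derivative_at_alt by (metis divide_pos_pos zero_less_norm_iff zero_less_numeral)
  show ?thesis
  proof (rule that[OF \<open>d > 0\<close>])
    fix y assume "norm (y - x) < d" "y \<noteq> x" and cone: "norm v * norm (y - x) / 3 \<le> v \<bullet> (y - x)"
    have "v \<bullet> (y - x) - norm v / 6 * norm (y - x) \<le> f y - f x"
      using d[OF \<open>norm (y - x) < d\<close>] unfolding real_norm_def by arith
    hence "norm v / 6 * norm (x - y) \<le> f y - f x"
      using cone by (simp add: norm_minus_commute)
    hence "norm v / 6 * norm (x - y) \<le> \<bar>f x - f y\<bar>"
      by linarith
    thus "norm v / 6 \<le> \<bar>f x - f y\<bar> / norm (x - y)"
      using \<open>y \<noteq> x\<close> by (simp add: field_simps)
  qed
qed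

definition log_quotient :: "real \<Rightarrow> ('a::euclidean_space \<Rightarrow> real) \<Rightarrow> 'a \<Rightarrow> 'a \<Rightarrow> real" where
  "log_quotient p f x y = ln (1 + \<bar>f x - f y\<bar> / norm (x - y)) / norm (x - y) powr (real DIM('a) / p)"

lemma log_quotient_superlevel_contains_ball:
  fixes f :: "'a::euclidean_space \<Rightarrow> real"
  assumes "v \<noteq> 0" and "p > 0"
    and quot: "\<And>y. norm (y - x) < d \<Longrightarrow> y \<noteq> x \<Longrightarrow> norm v * norm (y - x) / 3 \<le> v \<bullet> (y - x) \<Longrightarrow>
                 norm v / 6 \<le> \<bar>f x - f y\<bar> / norm (x - y)"
    and "0 < s" and "s \<le> d" and "0 < t" and ts: "t * s powr (real DIM('a) / p) \<le> ln (1 + norm v / 6)"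
  shows "ball (x + (s / 2) *\<^sub>R sgn v) (s / 4) \<subseteq> {y. t < log_quotient p f x y}"
proof
  fix y assume y: "y \<in> ball (x + (s / 2) *\<^sub>R sgn v) (s / 4)"
  define e where "e = real DIM('a) / p"
  have "e > 0" using \<open>p > 0\<close> by (simp add: e_def)
  have unit: "norm (sgn v) = 1" using \<open>v \<noteq> 0\<close> by (simp add: norm_sgn)
  note cone = ball_off_centre_subset_cone[OF unit \<open>0 < s\<close> y]
  have r: "0 < norm (y - x)" "norm (y - x) < s"
    using cone(1,2) \<open>0 < s\<close> by linarith+
  have "v \<bullet> (y - x) = norm v * (sgn v \<bullet> (y - x))"
    using \<open>v \<noteq> 0\<close> by (simp add: sgn_div_norm)
  hence "norm v * norm (y - x) / 3 \<le> v \<bullet> (y - x)"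
    using mult_left_mono[OF cone(3), of "norm v"] by simp
  hence "norm v / 6 \<le> \<bar>f x - f y\<bar> / norm (x - y)"
    using quot r \<open>s \<le> d\<close> by auto
  hence ln_ge: "ln (1 + norm v / 6) \<le> ln (1 + \<bar>f x - f y\<bar> / norm (x - y))"
    by (intro ln_mono) (auto intro: add_pos_nonneg)
  have "t * norm (y - x) powr e < t * s powr e"
    using r \<open>e > 0\<close> \<open>t > 0\<close> by (simp add: powr_less_mono2)
  also have "\<dots> \<le> ln (1 + \<bar>f x - f y\<bar> / norm (x - y))"
    using ts ln_ge by (simp add: e_def)
  finally show "y \<in> {y. t < log_quotient p f x y}"
    using r by (simp add: log_quotient_def e_def norm_minus_commute field_simps)
qed

lemma eventually_log_quotient_section_lower_bound:
  fixes f :: "'a::euclidean_space \<Rightarrow> real"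
  assumes "p > 0" and f_meas: "f \<in> borel_measurable borel"
    and der: "(f has_derivative (\<lambda>h. v \<bullet> h)) (at x)"
  shows "\<forall>\<^sub>F t in at_top.
           ennreal (unit_ball_vol (real DIM('a)) / 4 ^ DIM('a) * ln (1 + norm v / 6) powr p)
             \<le> ennreal (t powr p) * emeasure lborel {y. t < log_quotient p f x y}"
proof (cases "v = 0")
  case True
  then show ?thesis by simp
next
  case False
  define N where "N = real DIM('a)"
  define l where "l = ln (1 + norm v / 6)"
  have "N > 0" "l > 0"
    using False by (simp_all add: N_def l_def add_pos_pos)
  obtain d where "d > 0" and quot: "\<And>y. norm (y - x) < d \<Longrightarrow> y \<noteq> x \<Longrightarrow>
      norm v * norm (y - x) / 3 \<le> v \<bullet> (y - x) \<Longrightarrow> norm v / 6 \<le> \<bar>f x - f y\<bar> / norm (x - y)"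
    using has_derivative_difference_quotient_in_cone[OF der] by blast
  have "\<forall>\<^sub>F t in at_top. max 0 (l / d powr (N / p)) < t"
    by (rule eventually_gt_at_top)
  then show ?thesis
  proof eventually_elim
    case (elim t)
    then have "t > 0" by simp
    define s where "s = (l / t) powr (p / N)"
    have "s > 0"
      using \<open>l > 0\<close> \<open>t > 0\<close> by (simp add: s_def)
    have ts: "s powr (N / p) = l / t"
      using \<open>l > 0\<close> \<open>t > 0\<close> \<open>p > 0\<close> \<open>N > 0\<close> by (simp add: s_def powr_powr)
    have "l / t < d powr (N / p)"
      using elim \<open>d > 0\<close> \<open>t > 0\<close> by (simp add: field_simps)
    hence "s < (d powr (N / p)) powr (p / N)"
      unfolding s_def using \<open>l > 0\<close> \<open>t > 0\<close> \<open>p > 0\<close> \<open>N > 0\<close> by (intro powr_less_mono2) auto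
    also have "\<dots> = d"
      using \<open>d > 0\<close> \<open>p > 0\<close> \<open>N > 0\<close> by (simp add: powr_powr)
    finally have "s < d" .
    define S where "S = {y. t < log_quotient p f x y}"
    have ball: "ball (x + (s / 2) *\<^sub>R sgn v) (s / 4) \<subseteq> S"
      unfolding S_def using \<open>t > 0\<close> \<open>s > 0\<close> \<open>s < d\<close> ts
      by (intro log_quotient_superlevel_contains_ball[OF False \<open>p > 0\<close> quot])
         (auto simp: N_def l_def)
    have "S \<in> sets lborel"
      unfolding S_def log_quotient_def using f_meas by measurable
    have "ennreal (unit_ball_vol N * (s / 4) ^ DIM('a)) = emeasure lborel (ball (x + (s / 2) *\<^sub>R sgn v) (s / 4))"
      using \<open>s > 0\<close> by (simp add: emeasure_ball N_def)
    also have "\<dots> \<le> emeasure lborel S"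
      using ball \<open>S \<in> sets lborel\<close> by (rule emeasure_mono)
    finally have "ennreal (unit_ball_vol N * (s / 4) ^ DIM('a)) \<le> emeasure lborel S" .
    have scale: "t powr p * (unit_ball_vol N * (s / 4) ^ DIM('a)) = unit_ball_vol N / 4 ^ DIM('a) * l powr p"
    proof -
      have "s ^ DIM('a) = (l / t) powr p"
        using \<open>s > 0\<close> \<open>N > 0\<close> by (simp add: s_def N_def powr_powr flip: powr_realpow)
      thus ?thesis
        using \<open>t > 0\<close> \<open>l > 0\<close> by (simp add: power_divide powr_divide)
    qed
    have "ennreal (unit_ball_vol N / 4 ^ DIM('a) * l powr p)
        = ennreal (t powr p) * ennreal (unit_ball_vol N * (s / 4) ^ DIM('a))"
      unfolding scale[symmetric] using \<open>s > 0\<close> \<open>N > 0\<close> by (intro ennreal_mult) auto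
    also have "\<dots> \<le> ennreal (t powr p) * emeasure lborel S"
      by (rule mult_left_mono) (fact, simp)
    finally show ?case
      unfolding S_def l_def N_def .
  qed
qed

lemma not_eventually_at_top_realE:
  assumes "\<not> (\<forall>\<^sub>F t in at_top. P (t :: real))"
  obtains t :: "nat \<Rightarrow> real" where "filterlim t at_top sequentially" and "\<And>n. \<not> P (t n)"
proof -
  have "\<forall>n. \<exists>t. real n \<le> t \<and> \<not> P t"
    using assms unfolding eventually_at_top_linorder by blast
  then obtain t where t: "\<And>n. real n \<le> t n" "\<And>n. \<not> P (t n)"
    by metis
  have "filterlim t at_top sequentially"
    using filterlim_real_sequentially by (rule filterlim_at_top_mono) (simp add: t(1))
  then show ?thesis
    using t(2) by (rule that)
qed

lemma nn_integral_le_Liminf_at_top: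
  fixes h :: "real \<Rightarrow> 'a \<Rightarrow> ennreal"
  assumes h_meas: "\<And>t. h t \<in> borel_measurable M"
    and below: "\<And>x. x \<in> space M \<Longrightarrow> \<forall>\<^sub>F t in at_top. L x \<le> h t x"
  shows "(\<integral>\<^sup>+ x. L x \<partial>M) \<le> Liminf at_top (\<lambda>t. \<integral>\<^sup>+ x. h t x \<partial>M)"
  unfolding le_Liminf_iff
proof (intro allI impI)
  fix y assume y: "y < (\<integral>\<^sup>+ x. L x \<partial>M)"
  show "\<forall>\<^sub>F t in at_top. y < (\<integral>\<^sup>+ x. h t x \<partial>M)"
  proof (rule ccontr)
    assume "\<not> ?thesis"
    then obtain t where t: "filterlim t at_top sequentially" and le_y: "\<And>n. (\<integral>\<^sup>+ x. h (t n) x \<partial>M) \<le> y"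
      by (auto elim: not_eventually_at_top_realE simp: not_less)
    have "(\<integral>\<^sup>+ x. L x \<partial>M) \<le> (\<integral>\<^sup>+ x. liminf (\<lambda>n. h (t n) x) \<partial>M)"
    proof (rule nn_integral_mono)
      fix x assume "x \<in> space M"
      show "L x \<le> liminf (\<lambda>n. h (t n) x)"
        by (rule Liminf_bounded, rule eventually_compose_filterlim[OF below[OF \<open>x \<in> space M\<close>] t])
    qed
    also have "\<dots> \<le> liminf (\<lambda>n. \<integral>\<^sup>+ x. h (t n) x \<partial>M)"
      by (rule nn_integral_liminf) (rule h_meas)
    also have "\<dots> \<le> y"
      by (rule Liminf_le) (simp_all add: le_y)
    finally show False
      using y by simp
  qed
qed

lemma emeasure_lborel_pair_eq_nn_integral_sections:
  fixes E :: "('a::euclidean_space \<times> 'b::euclidean_space) set"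
  assumes "E \<in> sets borel"
  shows "emeasure lborel E = (\<integral>\<^sup>+ x. emeasure lborel (Pair x -` E) \<partial>lborel)"
proof -
  have E: "E \<in> sets (lborel \<Otimes>\<^sub>M lborel)"
    unfolding lborel_prod using assms by simp
  have "emeasure lborel E = emeasure (lborel \<Otimes>\<^sub>M lborel) E"
    by (simp add: lborel_prod)
  also have "\<dots> = (\<integral>\<^sup>+ x. emeasure lborel (Pair x -` E) \<partial>lborel)"
    by (rule lborel.emeasure_pair_measure_alt[OF E])
  finally show ?thesis .
qed

lemma nn_integral_ln_gradient_le_Liminf:
  fixes f :: "'a::euclidean_space \<Rightarrow> real" and g :: "'a \<Rightarrow> 'a"
  assumes "p > 0" and der: "\<And>x. (f has_derivative (\<lambda>h. g x \<bullet> h)) (at x)"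
  shows "(\<integral>\<^sup>+ x. ennreal (unit_ball_vol (real DIM('a)) / 4 ^ DIM('a) * ln (1 + norm (g x) / 6) powr p) \<partial>lborel)
           \<le> Liminf at_top (\<lambda>t. ennreal (t powr p) *
                emeasure (lborel :: ('a \<times> 'a) measure) {(x, y). t < log_quotient p f x y})"
proof -
  have f_cont: "continuous_on UNIV f"
    using der by (meson continuous_at_imp_continuous_on has_derivative_continuous)
  have f_meas: "f \<in> borel_measurable borel"
    using f_cont by (rule borel_measurable_continuous_onI)
  have [measurable]: "(\<lambda>z::'a \<times> 'a. f (fst z)) \<in> borel_measurable borel"
    "(\<lambda>z::'a \<times> 'a. f (snd z)) \<in> borel_measurable borel"
    "(\<lambda>z::'a \<times> 'a. norm (fst z - snd z)) \<in> borel_measurable borel"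
    by (intro borel_measurable_continuous_onI continuous_intros continuous_on_compose2[OF f_cont]; simp)+
  define E where "E t = {(x, y). t < log_quotient p f x y}" for t
  have E_meas: "E t \<in> sets borel" for t
  proof -
    have "E t = {z \<in> space borel. t < log_quotient p f (fst z) (snd z)}"
      by (auto simp: E_def)
    also have "\<dots> \<in> sets borel"
      unfolding log_quotient_def by measurable
    finally show ?thesis .
  qed
  have section_meas: "(\<lambda>x. emeasure lborel (Pair x -` E t)) \<in> borel_measurable lborel" for t
  proof (rule lborel.measurable_emeasure_Pair)
    show "E t \<in> sets (lborel \<Otimes>\<^sub>M lborel)"
      unfolding lborel_prod using E_meas by simp
  qed
  have slice: "Pair x -` E t = {y. t < log_quotient p f x y}" for x t
    by (auto simp: E_def)
  have "(\<integral>\<^sup>+ x. ennreal (unit_ball_vol (real DIM('a)) / 4 ^ DIM('a) * ln (1 + norm (g x) / 6) powr p) \<partial>lborel)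
      \<le> Liminf at_top (\<lambda>t. \<integral>\<^sup>+ x. ennreal (t powr p) * emeasure lborel (Pair x -` E t) \<partial>lborel)"
    using section_meas eventually_log_quotient_section_lower_bound[OF \<open>p > 0\<close> f_meas der]
    by (intro nn_integral_le_Liminf_at_top) (auto simp: slice lborel_prod)
  also have "(\<lambda>t. \<integral>\<^sup>+ x. ennreal (t powr p) * emeasure lborel (Pair x -` E t) \<partial>lborel)
      = (\<lambda>t. ennreal (t powr p) * emeasure lborel (E t))"
    using section_meas by (simp add: nn_integral_cmult emeasure_lborel_pair_eq_nn_integral_sections[OF E_meas])
  finally show ?thesis
    unfolding E_def .
qed

lemma nn_integral_ln_gradient_powr_le_Liminf:
  fixes f :: "'a::euclidean_space \<Rightarrow> real" and g :: "'a \<Rightarrow> 'a"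
  assumes "p > 0" and der: "\<And>x. (f has_derivative (\<lambda>h. g x \<bullet> h)) (at x)"
    and g_meas [measurable]: "g \<in> borel_measurable borel"
  defines "c \<equiv> unit_ball_vol (real DIM('a)) / 4 ^ DIM('a)"
  shows "(\<integral>\<^sup>+ x. ennreal (ln (1 + norm (g x)) powr p) \<partial>lborel)
           \<le> ennreal (6 powr p / c) * Liminf at_top (\<lambda>t. ennreal (t powr p) *
                emeasure (lborel :: ('a \<times> 'a) measure) {(x, y). t < log_quotient p f x y})"
proof -
  have "c > 0"
    by (simp add: c_def)
  have pointwise: "ln (1 + norm (g x)) powr p \<le> 6 powr p / c * (c * ln (1 + norm (g x) / 6) powr p)" for x
  proof -
    have "ln (1 + norm (g x)) powr p \<le> (6 * ln (1 + norm (g x) / 6)) powr p"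
      using ln_one_plus_le_mult_ln_one_plus_divide[of "norm (g x)" 6] \<open>p > 0\<close> by (intro powr_mono2) auto
    thus ?thesis
      using \<open>c > 0\<close> by (simp add: powr_mult)
  qed
  have "(\<integral>\<^sup>+ x. ennreal (ln (1 + norm (g x)) powr p) \<partial>lborel)
      \<le> (\<integral>\<^sup>+ x. ennreal (6 powr p / c) * ennreal (c * ln (1 + norm (g x) / 6) powr p) \<partial>lborel)"
    using pointwise \<open>c > 0\<close> by (intro nn_integral_mono) (simp add: ennreal_mult' [symmetric] ennreal_leI)
  also have "\<dots> = ennreal (6 powr p / c) * (\<integral>\<^sup>+ x. ennreal (c * ln (1 + norm (g x) / 6) powr p) \<partial>lborel)"
    by (rule nn_integral_cmult) measurable
  also have "\<dots> \<le> ennreal (6 powr p / c) * Liminf at_top (\<lambda>t. ennreal (t powr p) *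
              emeasure (lborel :: ('a \<times> 'a) measure) {(x, y). t < log_quotient p f x y})"
    using nn_integral_ln_gradient_le_Liminf[OF \<open>p > 0\<close> der] unfolding c_def
    by (rule mult_left_mono) simp
  finally show ?thesis .
qed

theorem mainTheorem15:
  fixes p :: real
  assumes "1 < p"
  shows "\<exists>C::real. C \<ge> 0 \<and>
    (\<forall>(f :: 'a::euclidean_space \<Rightarrow> real) (g :: 'a \<Rightarrow> 'a).
       (\<forall>x. (f has_derivative (\<lambda>h. g x \<bullet> h)) (at x)) \<and> continuous_on UNIV g \<longrightarrow>
       (\<integral>\<^sup>+ x. ennreal ((ln (1 + norm (g x))) powr p) \<partial>lborel)
         \<le> ennreal C * Liminf at_top (\<lambda>t::real. ennreal (t powr p) *
              emeasure (lborel :: ('a \<times> 'a) measure)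
                {(x, y). ln (1 + \<bar>f x - f y\<bar> / norm (x - y)) / norm (x - y) powr (real DIM('a) / p) > t}))"
proof -
  let ?C = "6 powr p / (unit_ball_vol (real DIM('a)) / 4 ^ DIM('a))"
  have C_nonneg: "0 \<le> ?C"
    by simp
  show ?thesis
  proof (intro exI[of _ ?C] conjI C_nonneg allI impI, elim conjE)
    fix f :: "'a \<Rightarrow> real" and g :: "'a \<Rightarrow> 'a"
    assume der: "\<forall>x. (f has_derivative (\<lambda>h. g x \<bullet> h)) (at x)" and "continuous_on UNIV g"
    then have "g \<in> borel_measurable borel"
      by (simp add: borel_measurable_continuous_onI)
    from nn_integral_ln_gradient_powr_le_Liminf[OF _ der[rule_format] this]
    show "(\<integral>\<^sup>+ x. ennreal (ln (1 + norm (g x)) powr p) \<partial>lborel)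
         \<le> ennreal ?C * Liminf at_top (\<lambda>t::real. ennreal (t powr p) *
              emeasure (lborel :: ('a \<times> 'a) measure)
                {(x, y). ln (1 + \<bar>f x - f y\<bar> / norm (x - y)) / norm (x - y) powr (real DIM('a) / p) > t})"
      using assms by (simp add: log_quotient_def)
  qed
qed

end
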